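(* Let $(\mathcal X,\rho)$ be a non-empty Polish metric space with Borel $\sigma$-field $\mathfrak B(\mathcal X)$, and let $\mathcal Y\in\mathfrak B(\mathcal X)$ be compact and satisfy $$c_{x,0}\,s^{-\gamma}\le \log \mathcal N_{\mathcal X}(s,\mathcal Y,\rho)\le c_{x,1}\,s^{-\gamma}\qquad\text{for all } s\in(0,s_0),$$ for constants $s_0>0$, $0<c_{x,0}<c_{x,1}$, $\gamma>0$. Fix $C>0$, $\beta\in(0,1]$, and let $\mathcal G=\mathcal G_{\beta,C}$ be the class of Borel measurable $g:\mathcal X\to\mathbb R$ with $\sup_{y\in\mathcal Y}|g(y)|\le C$ and $|g(y)-g(z)|\le C\rho(y,z)^\beta$ for all $y,z\in\mathcal Y$. For each $n$ consider the model $Y_j=g(X_j)+\varepsilon_j$, $j=1,\dots,n$, where $g\in\mathcal G$, $X_1,\dots,X_n$ are i.i.d. with law $P_{X,n}$ on $\mathfrak B(\mathcal X)$, $P_{X,n}(\mathcal Y)=1$, the $\varepsilon_j$ are i.i.d. real random variables with a continuously differentiable density $f_\varepsilon$ satisfying $\int |f_\varepsilon'(x)|^2/f_\varepsilon(x)\,\mathrm dx<\infty$, and $X_1,\varepsilon_1,\dots,X_n,\varepsilon_n$ are all independent. An estimator $\hat g_n$ is a Borel measurable map $(x,\mathcal Z_n)\mapsto \hat g_n(x,\mathcal Z_n)\in\mathbb R$ of $x\in\mathcal X$ and the data $\mathcal Z_n=\{(X_1,Y_1),\dots,(X_n,Y_n)\}$. (a) There exists a sequence of design measures $P_{X,n}$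 on $\mathfrak B(\mathcal X)$ with $P_{X,n}(\mathcal Y)=1$ for all $n$ such that no sequence of estimators $\{\hat g_n\}_n$ satisfies $$\sup_{g\in\mathcal G}\int E|\hat g_n(x)-g(x)|^2\,\mathrm dP_{X,n}(x)=o\big(\{\log n\}^{-2\beta/\gamma}\big).$$ (b) For any sequence of design measures $P_{X,n}$ with $P_{X,n}(\mathcal Y)=1$ for all $n$ and any sequence of estimators $\{\hat g_n\}_n$, $$\liminf_{n\to\infty}\sup_{g\in\mathcal G}\sup_{x\in\mathcal Y}P\big[|\hat g_n(x)-g(x)|^2>c\{\log n\}^{-2\beta/\gamma}\big]>0$$ for some constant $c>0$ depending on $C$ and $\beta$.
   Context: $\mathcal N_{\mathcal X}(\delta,\mathcal Y,\rho)$ denotes the minimal number of open $\rho$-balls in $\mathcal X$ of radius $\delta$ whose union contains $\mathcal Y$. Probabilities and expectations are under the model with regression function $g$. *)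

theory Defs
  imports "HOL-Probability.Probability"
begin

definition covering_number :: "real \<Rightarrow> 'a::metric_space set \<Rightarrow> nat" where
  "covering_number \<delta> Y = Inf {card C | C. finite C \<and> Y \<subseteq> (\<Union>c\<in>C. ball c \<delta>)}"

definition holder_class :: "'a::metric_space set \<Rightarrow> real \<Rightarrow> real \<Rightarrow> ('a \<Rightarrow> real) set" where
  "holder_class Y \<beta> C = {g. g \<in> borel_measurable borel \<and> (\<forall>y\<in>Y. \<bar>g y\<bar> \<le> C)
      \<and> (\<forall>y\<in>Y. \<forall>z\<in>Y. \<bar>g y - g z\<bar> \<le> C * dist y z powr \<beta>)}"

definition obs_law :: "'a::topological_space measure \<Rightarrow> (real \<Rightarrow> real) \<Rightarrow> ('a \<Rightarrow> real)
    \<Rightarrow> ('a \<times> real) measure" where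
  "obs_law PX f g = distr (PX \<Otimes>\<^sub>M density lborel (\<lambda>e. ennreal (f e))) (borel \<Otimes>\<^sub>M borel)
      (\<lambda>(x, e). (x, g x + e))"

definition sample_law :: "nat \<Rightarrow> 'a::topological_space measure \<Rightarrow> (real \<Rightarrow> real) \<Rightarrow> ('a \<Rightarrow> real)
    \<Rightarrow> (nat \<Rightarrow> 'a \<times> real) measure" where
  "sample_law n PX f g = PiM {..<n} (\<lambda>_. obs_law PX f g)"

definition estimator :: "nat \<Rightarrow> ('a::topological_space \<Rightarrow> (nat \<Rightarrow> 'a \<times> real) \<Rightarrow> real) \<Rightarrow> bool" where
  "estimator n gh \<longleftrightarrow> (\<lambda>(x, z). gh x z) \<in>
      borel_measurable (borel \<Otimes>\<^sub>M PiM {..<n} (\<lambda>_. borel \<Otimes>\<^sub>M borel))"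

definition design :: "'a::topological_space set \<Rightarrow> 'a measure \<Rightarrow> bool" where
  "design Y PX \<longleftrightarrow> prob_space PX \<and> sets PX = sets borel \<and> emeasure PX Y = 1"

definition worst_risk :: "nat \<Rightarrow> 'a::topological_space measure \<Rightarrow> (real \<Rightarrow> real) \<Rightarrow> ('a \<Rightarrow> real) set
    \<Rightarrow> ('a \<Rightarrow> (nat \<Rightarrow> 'a \<times> real) \<Rightarrow> real) \<Rightarrow> ennreal" where
  "worst_risk n PX f G gh = (SUP g\<in>G. \<integral>\<^sup>+ x. (\<integral>\<^sup>+ z. ennreal ((gh x z - g x)\<^sup>2) \<partial>sample_law n PX f g) \<partial>PX)"

end

theory Submission
  imports Defs "HOL-Real_Asymp.Real_Asymp"
begin

text \<open>
  Both bounds come from Hoelder bumps of height C r^beta around the points of a 2r-separated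
  subset S of Y. By the lower entropy bound Y contains such sets with n^2 points at a radius r
  of order (log n)^(-1/gamma), where the squared height is of order (log n)^(-2 beta/gamma).
  Realise the samples for all regression functions on one product space of latent pairs
  (X_j, eps_j). If g0 and g1 differ only on a ball which no X_j hits, the two samples coincide;
  when the ball has design mass at most 1/(2n) this happens with probability at least 1/2, so
  one of the two hypotheses suffers an error of a quarter of the squared height at the centre
  (Le Cam's two-point argument). For (b), every design gives mass at most 1/(2n) to one of the
  at least 2n disjoint balls around S. For (a), take the uniform design on S and average the
  two-point bound over the 2^|S| bump configurations (Assouad's cube argument).

  Of the assumptions on the
  noise density only measurability and total mass one matter; the others serve the matching
  upper bound.
\<close>

section \<open>The samples as images of latent pairs\<close>

definition noise_law :: "(real \<Rightarrow> real) \<Rightarrow> real measure" where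
  "noise_law f = density lborel (\<lambda>e. ennreal (f e))"

definition latent_law :: "'a::topological_space measure \<Rightarrow> (real \<Rightarrow> real) \<Rightarrow> ('a \<times> real) measure" where
  "latent_law PX f = PX \<Otimes>\<^sub>M noise_law f"

definition regression_map :: "('a \<Rightarrow> real) \<Rightarrow> 'a \<times> real \<Rightarrow> 'a \<times> real" where
  "regression_map g = (\<lambda>(x, e). (x, g x + e))"

definition avoid_event :: "nat \<Rightarrow> 'b set \<Rightarrow> (nat \<Rightarrow> 'b \<times> real) set" where
  "avoid_event n B = PiE {..<n} (\<lambda>_. (UNIV - B) \<times> UNIV)"

locale regression_model = prob_space PX
  for PX :: "'a::metric_space measure" and f :: "real \<Rightarrow> real" +
  assumes sets_PX: "sets PX = sets borel"
    and noise_density: "(\<integral>\<^sup>+ x. ennreal (f x) \<partial>lborel) = 1"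
    and noise_measurable: "f \<in> borel_measurable borel"
begin

lemma prob_space_noise_law: "prob_space (noise_law f)"
  unfolding noise_law_def
  using noise_measurable
  by (intro prob_spaceI) (subst emeasure_density, auto simp: noise_density)

lemma prob_space_latent_law: "prob_space (latent_law PX f)"
  unfolding latent_law_def by (intro prob_space_pair prob_space_axioms prob_space_noise_law)

lemma sets_latent_law: "sets (latent_law PX f) = sets (borel \<Otimes>\<^sub>M borel)"
  unfolding latent_law_def noise_law_def by (intro sets_pair_measure_cong) (simp_all add: sets_PX)

lemma regression_map_measurable:
  assumes "g \<in> borel_measurable borel"
  shows "regression_map g \<in> latent_law PX f \<rightarrow>\<^sub>M borel \<Otimes>\<^sub>M borel"
proof -
  have "regression_map g \<in> borel \<Otimes>\<^sub>M borel \<rightarrow>\<^sub>M borel \<Otimes>\<^sub>M borel"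
    unfolding regression_map_def using assms by measurable
  then show ?thesis by (simp add: measurable_cong_sets[OF sets_latent_law refl])
qed

lemma obs_law_eq_distr: "obs_law PX f g = distr (latent_law PX f) (borel \<Otimes>\<^sub>M borel) (regression_map g)"
  by (simp add: obs_law_def latent_law_def noise_law_def regression_map_def)

text \<open>The sample is the coordinatewise image of an i.i.d. sample of latent pairs (X, eps); this
  realises the laws for all regression functions on one probability space.\<close>
lemma sample_law_eq_distr:
  assumes g: "g \<in> borel_measurable borel"
  shows "sample_law n PX f g = distr (PiM {..<n} (\<lambda>_. latent_law PX f))
           (PiM {..<n} (\<lambda>_. borel \<Otimes>\<^sub>M borel)) (compose {..<n} (regression_map g))"
proof -
  have obs: "prob_space (obs_law PX f g)"
    unfolding obs_law_eq_distr
    by (intro prob_space.prob_space_distr prob_space_latent_law regression_map_measurable g)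
  have meas: "regression_map g \<in> latent_law PX f \<rightarrow>\<^sub>M obs_law PX f g"
    using regression_map_measurable[OF g] by (simp add: obs_law_def)
  have "sample_law n PX f g = PiM {..<n} (\<lambda>_. distr (latent_law PX f) (obs_law PX f g) (regression_map g))"
    unfolding sample_law_def obs_law_eq_distr by (intro PiM_cong distr_cong) (auto simp: obs_law_def)
  also have "\<dots> = distr (PiM {..<n} (\<lambda>_. latent_law PX f)) (PiM {..<n} (\<lambda>_. obs_law PX f g))
      (compose {..<n} (regression_map g))"
    by (rule distr_PiM_finite_prob_space'[symmetric]) (use prob_space_latent_law obs meas in auto)
  also have "\<dots> = distr (PiM {..<n} (\<lambda>_. latent_law PX f))
           (PiM {..<n} (\<lambda>_. borel \<Otimes>\<^sub>M borel)) (compose {..<n} (regression_map g))"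
    by (intro distr_cong sets_PiM_cong) (auto simp: obs_law_def)
  finally show ?thesis .
qed

lemma compose_regression_map_measurable:
  assumes "g \<in> borel_measurable borel"
  shows "compose {..<n} (regression_map g)
    \<in> PiM {..<n} (\<lambda>_. latent_law PX f) \<rightarrow>\<^sub>M PiM {..<n} (\<lambda>_. borel \<Otimes>\<^sub>M borel)"
proof -
  note [measurable] = regression_map_measurable[OF assms]
  show ?thesis unfolding compose_def by measurable
qed

lemma avoid_event_sets:
  assumes "B \<in> sets borel"
  shows "avoid_event n B \<in> sets (PiM {..<n} (\<lambda>_. latent_law PX f))"
  unfolding avoid_event_def using assms by (intro sets_PiM_I_finite) (auto simp: sets_latent_law)

lemma avoid_event_prob:
  assumes B: "B \<in> sets borel"
  shows "ennreal (1 - real n * measure PX B) \<le> emeasure (PiM {..<n} (\<lambda>_. latent_law PX f)) (avoid_event n B)"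
proof -
  interpret latent: product_prob_space "\<lambda>_. latent_law PX f"
    by (simp add: product_prob_space_def product_sigma_finite_def product_prob_space_axioms_def
        prob_space_latent_law prob_space_imp_sigma_finite)
  have BX: "B \<in> sets PX" "UNIV - B \<in> sets PX" using B by (simp_all add: sets_PX)
  have "emeasure (latent_law PX f) ((UNIV - B) \<times> UNIV) = emeasure PX (UNIV - B) * emeasure (noise_law f) UNIV"
    unfolding latent_law_def using BX prob_space_noise_law
    by (intro sigma_finite_measure.emeasure_pair_measure_Times prob_space_imp_sigma_finite)
      (auto simp: noise_law_def)
  also have "\<dots> = ennreal (1 - measure PX B)"
    using prob_space.emeasure_space_1[OF prob_space_noise_law] BX
    by (simp add: noise_law_def emeasure_eq_measure prob_compl[symmetric] sets_eq_imp_space_eq[OF sets_PX])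
  finally have "emeasure (PiM {..<n} (\<lambda>_. latent_law PX f)) (avoid_event n B) = ennreal ((1 - measure PX B) ^ n)"
    unfolding avoid_event_def using B
    by (subst latent.emeasure_PiM) (auto simp: sets_latent_law ennreal_power)
  moreover have "1 - real n * measure PX B \<le> (1 - measure PX B) ^ n"
    using Bernoulli_inequality[of "- measure PX B" n] by simp
  ultimately show ?thesis by (simp add: ennreal_leI)
qed

end

lemma regression_model_of_design:
  assumes "design Y PX" "(\<integral>\<^sup>+ x. ennreal (f x) \<partial>lborel) = 1" "f \<in> borel_measurable borel"
  shows "regression_model PX f"
  using assms by (simp add: design_def regression_model_def regression_model_axioms_def)

lemma estimator_measurable_at:
  assumes "estimator n gh"
  shows "gh x \<in> borel_measurable (PiM {..<n} (\<lambda>_. borel \<Otimes>\<^sub>M borel))"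
  using measurable_Pair2[OF assms[unfolded estimator_def], of x] by simp

section \<open>Le Cam's two-point argument\<close>

lemma power2_gap_le: "(a1 - a0)\<^sup>2 \<le> 2 * (x - a0)\<^sup>2 + 2 * (x - a1)\<^sup>2" for a0 a1 x :: real
proof -
  have "0 \<le> (2 * x - a0 - a1)\<^sup>2" by simp
  then show ?thesis by (simp add: power2_eq_square algebra_simps)
qed

text \<open>A statistic cannot be t-close to both a0 and a1 when these are more than 2 sqrt t apart,
  so on E, where the two realisations agree, one of the two errors occurs.\<close>
lemma coupled_error_prob:
  fixes G :: "'b \<Rightarrow> real"
  assumes E: "E \<in> sets \<Omega>"
    and \<Phi>0: "\<Phi>0 \<in> \<Omega> \<rightarrow>\<^sub>M Z" and \<Phi>1: "\<Phi>1 \<in> \<Omega> \<rightarrow>\<^sub>M Z"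
    and agree: "\<And>\<omega>. \<omega> \<in> E \<Longrightarrow> \<Phi>0 \<omega> = \<Phi>1 \<omega>"
    and G: "G \<in> borel_measurable Z" and gap: "4 * t < (a1 - a0)\<^sup>2"
  shows "emeasure \<Omega> E \<le> emeasure (distr \<Omega> Z \<Phi>0) {z \<in> space (distr \<Omega> Z \<Phi>0). t < (G z - a0)\<^sup>2}
       + emeasure (distr \<Omega> Z \<Phi>1) {z \<in> space (distr \<Omega> Z \<Phi>1). t < (G z - a1)\<^sup>2}"
proof -
  note [measurable] = G \<Phi>0 \<Phi>1
  define err where "err a = {z \<in> space Z. t < (G z - a)\<^sup>2}" for a
  have err_sets [measurable]: "err a \<in> sets Z" for a unfolding err_def by measurable
  have "E \<subseteq> (\<Phi>0 -` err a0 \<inter> space \<Omega>) \<union> (\<Phi>1 -` err a1 \<inter> space \<Omega>)"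
  proof
    fix \<omega> assume \<omega>: "\<omega> \<in> E"
    then have "\<omega> \<in> space \<Omega>" using E sets.sets_into_space by blast
    moreover have "\<Phi>0 \<omega> \<in> err a0 \<or> \<Phi>0 \<omega> \<in> err a1"
      using power2_gap_le[of a1 a0 "G (\<Phi>0 \<omega>)"] gap measurable_space[OF \<Phi>0 \<open>\<omega> \<in> space \<Omega>\<close>]
      unfolding err_def by auto
    ultimately show "\<omega> \<in> (\<Phi>0 -` err a0 \<inter> space \<Omega>) \<union> (\<Phi>1 -` err a1 \<inter> space \<Omega>)"
      using agree[OF \<omega>] by auto
  qed
  then have "emeasure \<Omega> E \<le> emeasure \<Omega> (\<Phi>0 -` err a0 \<inter> space \<Omega>) + emeasure \<Omega> (\<Phi>1 -` err a1 \<inter> space \<Omega>)"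
    by (meson emeasure_mono emeasure_subadditive measurable_sets \<Phi>0 \<Phi>1 err_sets sets.Un order_trans)
  then show ?thesis by (simp add: emeasure_distr err_def)
qed

lemma coupled_error_risk:
  fixes G :: "'b \<Rightarrow> real"
  assumes E: "E \<in> sets \<Omega>"
    and \<Phi>0: "\<Phi>0 \<in> \<Omega> \<rightarrow>\<^sub>M Z" and \<Phi>1: "\<Phi>1 \<in> \<Omega> \<rightarrow>\<^sub>M Z"
    and agree: "\<And>\<omega>. \<omega> \<in> E \<Longrightarrow> \<Phi>0 \<omega> = \<Phi>1 \<omega>"
    and G: "G \<in> borel_measurable Z"
  shows "ennreal ((a1 - a0)\<^sup>2 / 2) * emeasure \<Omega> E \<le>
      (\<integral>\<^sup>+ z. ennreal ((G z - a0)\<^sup>2) \<partial>distr \<Omega> Z \<Phi>0) + (\<integral>\<^sup>+ z. ennreal ((G z - a1)\<^sup>2) \<partial>distr \<Omega> Z \<Phi>1)"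
proof -
  note [measurable] = G \<Phi>0 \<Phi>1
  have "ennreal ((a1 - a0)\<^sup>2 / 2) * emeasure \<Omega> E = (\<integral>\<^sup>+ \<omega>. ennreal ((a1 - a0)\<^sup>2 / 2) * indicator E \<omega> \<partial>\<Omega>)"
    using E by (simp add: nn_integral_cmult_indicator)
  also have "\<dots> \<le> (\<integral>\<^sup>+ \<omega>. ennreal ((G (\<Phi>0 \<omega>) - a0)\<^sup>2) + ennreal ((G (\<Phi>1 \<omega>) - a1)\<^sup>2) \<partial>\<Omega>)"
  proof (intro nn_integral_mono)
    fix \<omega>
    show "ennreal ((a1 - a0)\<^sup>2 / 2) * indicator E \<omega>
        \<le> ennreal ((G (\<Phi>0 \<omega>) - a0)\<^sup>2) + ennreal ((G (\<Phi>1 \<omega>) - a1)\<^sup>2)"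
      using power2_gap_le[of a1 a0 "G (\<Phi>0 \<omega>)"] agree[of \<omega>]
      by (cases "\<omega> \<in> E") (simp_all add: ennreal_plus[symmetric] del: ennreal_plus)
  qed
  also have "\<dots> = (\<integral>\<^sup>+ \<omega>. ennreal ((G (\<Phi>0 \<omega>) - a0)\<^sup>2) \<partial>\<Omega>) + (\<integral>\<^sup>+ \<omega>. ennreal ((G (\<Phi>1 \<omega>) - a1)\<^sup>2) \<partial>\<Omega>)"
    by (intro nn_integral_add) auto
  finally show ?thesis by (simp add: nn_integral_distr)
qed

lemma le_of_double_le_add_self: "2 * x \<le> y + y \<Longrightarrow> x \<le> (y::ennreal)"
  by (simp add: mult_2[symmetric] ennreal_mult_le_mult_iff)

context regression_model
begin

lemma avoid_event_ball_prob:
  assumes "real n * measure PX (ball i r) \<le> 1/2"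
  shows "1/2 \<le> emeasure (PiM {..<n} (\<lambda>_. latent_law PX f)) (avoid_event n (ball i r))"
proof -
  have "ennreal (1/2) \<le> ennreal (1 - real n * measure PX (ball i r))"
    using assms by (intro ennreal_leI) simp
  also have "\<dots> \<le> emeasure (PiM {..<n} (\<lambda>_. latent_law PX f)) (avoid_event n (ball i r))"
    by (intro avoid_event_prob) simp
  finally show ?thesis by (simp add: divide_ennreal_def)
qed

lemma avoid_event_agree:
  assumes agree: "\<And>y. r \<le> dist y i \<Longrightarrow> g0 y = g1 y" and \<omega>: "\<omega> \<in> avoid_event n (ball i r)"
  shows "compose {..<n} (regression_map g0) \<omega> = compose {..<n} (regression_map g1) \<omega>"
proof -
  have "regression_map g0 (\<omega> j) = regression_map g1 (\<omega> j)" if "j < n" for j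
  proof -
    have "\<omega> j \<in> (UNIV - ball i r) \<times> UNIV"
      using \<omega> that by (auto simp: avoid_event_def PiE_iff)
    then have "r \<le> dist (fst (\<omega> j)) i" by (auto simp: mem_Times_iff dist_commute)
    then show ?thesis using agree by (simp add: regression_map_def split_beta)
  qed
  then show ?thesis by (auto simp: compose_def)
qed

lemma two_point_error_prob:
  assumes g: "g0 \<in> borel_measurable borel" "g1 \<in> borel_measurable borel"
    and agree: "\<And>y. r \<le> dist y i \<Longrightarrow> g0 y = g1 y"
    and light: "real n * measure PX (ball i r) \<le> 1/2"
    and est: "estimator n gh" and gap: "4 * t < (g1 i - g0 i)\<^sup>2"
  shows "1/2 \<le> emeasure (sample_law n PX f g0) {z \<in> space (sample_law n PX f g0). t < (gh i z - g0 i)\<^sup>2}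
             + emeasure (sample_law n PX f g1) {z \<in> space (sample_law n PX f g1). t < (gh i z - g1 i)\<^sup>2}"
  unfolding sample_law_eq_distr[OF g(1)] sample_law_eq_distr[OF g(2)]
  using avoid_event_ball_prob[OF light]
  by (rule order_trans, intro coupled_error_prob avoid_event_sets compose_regression_map_measurable
      avoid_event_agree[OF agree] estimator_measurable_at[OF est] g gap) simp_all

lemma two_point_error_risk:
  assumes g: "g0 \<in> borel_measurable borel" "g1 \<in> borel_measurable borel"
    and agree: "\<And>y. r \<le> dist y i \<Longrightarrow> g0 y = g1 y"
    and light: "real n * measure PX (ball i r) \<le> 1/2"
    and est: "estimator n gh"
  shows "ennreal ((g1 i - g0 i)\<^sup>2 / 4) \<le> (\<integral>\<^sup>+ z. ennreal ((gh i z - g0 i)\<^sup>2) \<partial>sample_law n PX f g0)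
             + (\<integral>\<^sup>+ z. ennreal ((gh i z - g1 i)\<^sup>2) \<partial>sample_law n PX f g1)"
proof -
  have half: "ennreal (1/2) = 1/2" by (simp add: divide_ennreal_def)
  have "ennreal ((g1 i - g0 i)\<^sup>2 / 4) = ennreal ((g1 i - g0 i)\<^sup>2 / 2) * (1/2)"
    unfolding half[symmetric] by (simp add: ennreal_mult'[symmetric] del: ennreal_half)
  also have "\<dots> \<le> ennreal ((g1 i - g0 i)\<^sup>2 / 2) * emeasure (PiM {..<n} (\<lambda>_. latent_law PX f)) (avoid_event n (ball i r))"
    by (intro mult_left_mono avoid_event_ball_prob light) simp
  also have "\<dots> \<le> (\<integral>\<^sup>+ z. ennreal ((gh i z - g0 i)\<^sup>2) \<partial>sample_law n PX f g0)
             + (\<integral>\<^sup>+ z. ennreal ((gh i z - g1 i)\<^sup>2) \<partial>sample_law n PX f g1)"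
    unfolding sample_law_eq_distr[OF g(1)] sample_law_eq_distr[OF g(2)]
    by (intro coupled_error_risk avoid_event_sets compose_regression_map_measurable
      avoid_event_agree[OF agree] estimator_measurable_at[OF est] g) simp_all
  finally show ?thesis .
qed

end

section \<open>Hoelder bumps\<close>

lemma powr_add_le_add_powr:
  fixes x y \<beta> :: real
  assumes "0 \<le> x" "0 \<le> y" "0 < \<beta>" "\<beta> \<le> 1"
  shows "(x + y) powr \<beta> \<le> x powr \<beta> + y powr \<beta>"
proof (cases "x + y = 0")
  case False
  define s where "s = x + y"
  have s: "s > 0" using False assms unfolding s_def by auto
  have "1 = x / s + y / s" using s by (simp add: add_divide_distrib[symmetric] s_def)
  also have "\<dots> \<le> (x / s) powr \<beta> + (y / s) powr \<beta>"
    using powr_mono'[of \<beta> 1 "x/s"] powr_mono'[of \<beta> 1 "y/s"] assms s by (simp add: s_def)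
  also have "\<dots> = (x powr \<beta> + y powr \<beta>) / s powr \<beta>"
    by (simp add: powr_divide add_divide_distrib)
  finally show ?thesis using s by (simp add: s_def le_divide_eq)
qed (use assms in auto)

lemma abs_powr_diff_le:
  fixes a b \<beta> :: real
  assumes "0 \<le> a" "0 \<le> b" "0 < \<beta>" "\<beta> \<le> 1"
  shows "\<bar>a powr \<beta> - b powr \<beta>\<bar> \<le> \<bar>a - b\<bar> powr \<beta>"
proof -
  have *: "\<bar>a powr \<beta> - b powr \<beta>\<bar> \<le> \<bar>a - b\<bar> powr \<beta>" if "0 \<le> b" "b \<le> a" for a b
  proof -
    have "a powr \<beta> \<le> (a - b) powr \<beta> + b powr \<beta>"
      using powr_add_le_add_powr[of "a - b" b] that assms by simp
    then show ?thesis using powr_mono2[of \<beta> b a] that assms by auto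
  qed
  show ?thesis using *[of b a] *[of a b] assms by (cases "a \<le> b") (auto simp: abs_minus_commute)
qed

text \<open>The case sigma = {} is separate because infdist y {} = 0.\<close>
definition holder_bump :: "real \<Rightarrow> real \<Rightarrow> real \<Rightarrow> 'a::metric_space set \<Rightarrow> 'a \<Rightarrow> real" where
  "holder_bump C \<beta> r \<sigma> y = (if \<sigma> = {} then 0 else C * (max 0 (r - infdist y \<sigma>)) powr \<beta>)"

lemma holder_bump_in_holder_class:
  assumes C: "C > 0" and r: "0 < r" "r \<le> 1" and \<beta>: "0 < \<beta>" "\<beta> \<le> 1"
  shows "holder_bump C \<beta> r \<sigma> \<in> holder_class Y \<beta> C"
proof (cases "\<sigma> = {}")
  case True
  then show ?thesis using C unfolding holder_class_def holder_bump_def by auto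
next
  case False
  define h where "h y = max 0 (r - infdist y \<sigma>)" for y
  have bump: "holder_bump C \<beta> r \<sigma> = (\<lambda>y. C * h y powr \<beta>)"
    using False by (auto simp: holder_bump_def h_def)
  have "continuous_on UNIV (\<lambda>y. C * h y powr \<beta>)"
    unfolding h_def by (intro continuous_intros continuous_on_powr') (use \<beta> in auto)
  then have "holder_bump C \<beta> r \<sigma> \<in> borel_measurable borel"
    unfolding bump by (rule borel_measurable_continuous_onI)
  moreover have "\<bar>C * h y powr \<beta>\<bar> \<le> C" for y
  proof -
    have "h y powr \<beta> \<le> 1" using r \<beta> infdist_nonneg[of y \<sigma>] by (intro powr_le1) (auto simp: h_def)
    then show ?thesis using C by (auto simp: abs_mult)
  qed
  moreover have "\<bar>C * h y powr \<beta> - C * h z powr \<beta>\<bar> \<le> C * dist y z powr \<beta>" for y z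
  proof -
    have "\<bar>h y powr \<beta> - h z powr \<beta>\<bar> \<le> \<bar>h y - h z\<bar> powr \<beta>"
      using \<beta> by (intro abs_powr_diff_le) (auto simp: h_def)
    also have "\<dots> \<le> dist y z powr \<beta>"
      using infdist_triangle_abs[of y \<sigma> z] \<beta>
      by (intro powr_mono2) (auto simp: h_def max_def abs_if split: if_splits)
    finally show ?thesis using C by (simp add: right_diff_distrib[symmetric] abs_mult)
  qed
  ultimately show ?thesis unfolding holder_class_def bump by auto
qed

lemma holder_bump_center:
  assumes "i \<in> \<sigma>" "0 \<le> r"
  shows "holder_bump C \<beta> r \<sigma> i = C * r powr \<beta>"
  using assms by (auto simp: holder_bump_def)

lemma holder_bump_far:
  assumes "\<And>j. j \<in> \<sigma> \<Longrightarrow> r \<le> dist y j"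
  shows "holder_bump C \<beta> r \<sigma> y = 0"
proof (cases "\<sigma> = {}")
  case False
  have "r \<le> infdist y \<sigma>"
    unfolding infdist_notempty[OF False] by (rule cINF_greatest) (use False assms in auto)
  then show ?thesis by (simp add: holder_bump_def)
qed (simp add: holder_bump_def)

lemma holder_bump_insert:
  assumes "r \<le> dist y i"
  shows "holder_bump C \<beta> r (insert i \<sigma>) y = holder_bump C \<beta> r \<sigma> y"
proof (cases "\<sigma> = {}")
  case True
  then show ?thesis using assms by (simp add: holder_bump_def)
next
  case False
  then have "infdist y (insert i \<sigma>) = min (dist y i) (infdist y \<sigma>)"
    using infdist_Un_min[of "{i}" \<sigma> y] by simp
  then show ?thesis using False assms by (auto simp: holder_bump_def min_def max_def)
qed

section \<open>Packings at the logarithmic scale\<close>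

definition separated :: "real \<Rightarrow> 'a::metric_space set \<Rightarrow> bool" where
  "separated s S \<longleftrightarrow> (\<forall>i\<in>S. \<forall>j\<in>S. i \<noteq> j \<longrightarrow> s \<le> dist i j)"

definition ball_packing :: "'a::metric_space set \<Rightarrow> real \<Rightarrow> nat \<Rightarrow> bool" where
  "ball_packing Y r m \<longleftrightarrow> (\<exists>S\<subseteq>Y. finite S \<and> S \<noteq> {} \<and> m \<le> card S \<and> separated (2 * r) S)"

text \<open>A maximal s-separated subset of Y is an s-net of Y, hence at least as large as the
  covering number.\<close>
lemma separated_subset_of_covering_number:
  fixes Y :: "'a::metric_space set"
  assumes K: "K \<le> covering_number s Y" and s: "s > 0"
  shows "\<exists>S \<subseteq> Y. finite S \<and> K \<le> card S \<and> separated s S"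
proof (rule ccontr)
  define P where "P S \<longleftrightarrow> S \<subseteq> Y \<and> finite S \<and> separated s S" for S
  assume "\<not> ?thesis"
  then have small: "P S \<Longrightarrow> card S < K" for S by (auto simp: P_def not_le)
  have "P {}" by (simp add: P_def separated_def)
  then obtain S where S: "P S" and maximal: "\<And>T. P T \<Longrightarrow> card T \<le> card S"
    using ex_has_greatest_nat[of P "{}" card K] small by blast
  have "Y \<subseteq> (\<Union>c\<in>S. ball c s)"
  proof
    fix y assume y: "y \<in> Y"
    show "y \<in> (\<Union>c\<in>S. ball c s)"
    proof (rule ccontr)
      assume "y \<notin> (\<Union>c\<in>S. ball c s)"
      then have far: "\<forall>c\<in>S. s \<le> dist y c" by (auto simp: not_less dist_commute)
      then have "y \<notin> S" using s by fastforce
      moreover have "P (insert y S)" using S y far by (auto simp: P_def separated_def dist_commute)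
      ultimately show False using maximal[of "insert y S"] S by (simp add: P_def)
    qed
  qed
  then have "covering_number s Y \<le> card S"
    unfolding covering_number_def using S by (intro cInf_lower) (auto simp: P_def)
  then show False using K small[OF S] by simp
qed

lemma exists_light_ball:
  assumes P: "prob_space P" "sets P = sets borel"
    and S: "finite S" "S \<noteq> {}" "2 * n \<le> card S" "separated (2 * r) S"
  shows "\<exists>i\<in>S. real n * measure P (ball i r) \<le> 1/2"
proof (rule ccontr)
  interpret prob_space P by fact
  assume "\<not> ?thesis"
  then have heavy: "1/2 < real n * measure P (ball i r)" if "i \<in> S" for i
    using that by (auto simp: not_le)
  have "disjoint_family_on (\<lambda>i. ball i r) S"
  proof (unfold disjoint_family_on_def, intro ballI impI)
    fix i j assume ij: "i \<in> S" "j \<in> S" "i \<noteq> j"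
    show "ball i r \<inter> ball j r = {}"
      using ij S(4) dist_triangle_less_add[of i _ r j r] by (force simp: separated_def dist_commute)
  qed
  then have "(\<Sum>i\<in>S. measure P (ball i r)) = measure P (\<Union>i\<in>S. ball i r)"
    using S(1) by (intro finite_measure_finite_Union[symmetric]) (auto simp: P(2))
  also have "\<dots> \<le> 1" by (rule prob_le_1)
  finally have "(\<Sum>i\<in>S. real n * measure P (ball i r)) \<le> real n"
    by (simp add: sum_distrib_left[symmetric] mult_left_le)
  moreover have "(\<Sum>i\<in>S. 1/2) < (\<Sum>i\<in>S. real n * measure P (ball i r))"
    using S heavy by (intro sum_strict_mono) auto
  ultimately show False using S(3) by simp
qed

definition log_radius :: "real \<Rightarrow> real \<Rightarrow> nat \<Rightarrow> real" where
  "log_radius a \<gamma> n = (a / ln (real n)) powr (1 / \<gamma>) / 2"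

lemma log_radius_tendsto_0:
  assumes "a > 0" "\<gamma> > 0"
  shows "log_radius a \<gamma> \<longlonglongrightarrow> 0"
  unfolding log_radius_def using assms by real_asymp

lemma holder_bump_height_log_radius:
  assumes "0 < ln (real n)"
  shows "(C * log_radius a \<gamma> n powr \<beta>)\<^sup>2
    = (C * (a powr (1 / \<gamma>) / 2) powr \<beta>)\<^sup>2 * ln (real n) powr (- 2 * \<beta> / \<gamma>)"
proof -
  define L where "L = ln (real n)"
  have L: "L > 0" using assms by (simp add: L_def)
  have r: "log_radius a \<gamma> n = a powr (1 / \<gamma>) / 2 * L powr (- 1 / \<gamma>)"
    using L by (simp add: log_radius_def L_def powr_divide powr_minus_divide)
  have "log_radius a \<gamma> n powr \<beta> = (a powr (1 / \<gamma>) / 2) powr \<beta> * (L powr (- 1 / \<gamma>)) powr \<beta>"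
    unfolding r by (rule powr_mult)
  also have "(L powr (- 1 / \<gamma>)) powr \<beta> = L powr (- \<beta> / \<gamma>)"
    by (simp add: powr_powr)
  moreover have "(L powr (- \<beta> / \<gamma>))\<^sup>2 = L powr (- 2 * \<beta> / \<gamma>)"
    by (simp add: power2_eq_square powr_add[symmetric])
  ultimately show ?thesis by (simp add: L_def power_mult_distrib)
qed

text \<open>At the scale s = 2 r with log N(s) \<ge> cx0 s^(-gamma) = 2 log n there are n^2 points of Y
  that are s-apart.\<close>
lemma eventually_ball_packing_log_radius:
  fixes Y :: "'a::metric_space set"
  assumes s0: "s0 > 0" and cx0: "cx0 > 0" and \<gamma>: "\<gamma> > 0"
    and entropy: "\<And>s. 0 < s \<Longrightarrow> s < s0 \<Longrightarrow> cx0 * s powr (-\<gamma>) \<le> ln (real (covering_number s Y))"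
  defines "r \<equiv> log_radius (cx0 / 2) \<gamma>"
  shows "\<forall>\<^sub>F n in sequentially. 0 < ln (real n) \<and> 0 < r n \<and> r n \<le> 1 \<and> ball_packing Y (r n) (2 * n)"
proof -
  have "\<forall>\<^sub>F n in sequentially. r n < min (s0 / 2) 1"
    unfolding r_def using cx0 \<gamma> s0 by (intro order_tendstoD(2)[OF log_radius_tendsto_0]) auto
  with eventually_ge_at_top[of 2] show ?thesis
  proof eventually_elim
    case (elim n)
    define s where "s = 2 * r n"
    have L: "0 < ln (real n)" using elim by simp
    have s: "0 < s" "s < s0" using elim cx0 L by (simp_all add: s_def r_def log_radius_def)
    have "s = (cx0 / 2 / ln (real n)) powr (1 / \<gamma>)" by (simp add: s_def r_def log_radius_def)
    then have "s powr (-\<gamma>) = (cx0 / 2 / ln (real n)) powr (-1)" using \<gamma> by (simp add: powr_powr)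
    then have "cx0 * s powr (-\<gamma>) = ln (real (n\<^sup>2))" using cx0 L elim by (simp add: powr_minus_divide ln_realpow)
    then have ln_le: "ln (real (n\<^sup>2)) \<le> ln (real (covering_number s Y))" using entropy[OF s] by simp
    have "1 < n\<^sup>2" using elim one_less_power[of n 2] by simp
    then have n2: "1 < real (n\<^sup>2)" by linarith
    have "0 < real (covering_number s Y)"
      using ln_le ln_gt_zero[OF n2] by (cases "covering_number s Y") auto
    then have "n\<^sup>2 \<le> covering_number s Y"
      using ln_le n2 elim by (subst (asm) ln_le_cancel_iff) (auto simp del: of_nat_power)
    then obtain S where "S \<subseteq> Y" "finite S" "n\<^sup>2 \<le> card S" "separated s S"
      using separated_subset_of_covering_number[OF _ s(1)] by blast
    moreover have "2 * n \<le> n\<^sup>2" using elim by (simp add: power2_eq_square)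
    ultimately show ?case
      using elim L s unfolding ball_packing_def s_def by (intro conjI exI[of _ S]) auto
  qed
qed

section \<open>The pointwise lower bound\<close>

context regression_model
begin

lemma holder_class_pointwise_error_lower_bound:
  assumes est: "estimator n gh" and i: "i \<in> Y"
    and C: "C > 0" and r: "0 < r" "r \<le> 1" and \<beta>: "0 < \<beta>" "\<beta> \<le> 1"
    and light: "real n * measure PX (ball i r) \<le> 1/2"
    and gap: "4 * t < (C * r powr \<beta>)\<^sup>2"
  shows "1/4 \<le> (SUP g\<in>holder_class Y \<beta> C. SUP x\<in>Y. emeasure (sample_law n PX f g)
             {z \<in> space (sample_law n PX f g). t < (gh x z - g x)\<^sup>2})" (is "_ \<le> ?Q")
proof -
  define g0 where "g0 = holder_bump C \<beta> r ({}::'a set)"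
  define g1 where "g1 = holder_bump C \<beta> r {i}"
  have H: "g0 \<in> holder_class Y \<beta> C" "g1 \<in> holder_class Y \<beta> C"
    unfolding g0_def g1_def using C r \<beta> by (simp_all add: holder_bump_in_holder_class)
  then have "g0 \<in> borel_measurable borel" "g1 \<in> borel_measurable borel"
    by (auto simp: holder_class_def)
  moreover have "g0 y = g1 y" if "r \<le> dist y i" for y
    using holder_bump_insert[OF that, of C \<beta> "{}"] by (simp add: g0_def g1_def)
  moreover have "4 * t < (g1 i - g0 i)\<^sup>2"
    using gap r by (simp add: g0_def g1_def holder_bump_def)
  ultimately have "1/2 \<le> emeasure (sample_law n PX f g0) {z \<in> space (sample_law n PX f g0). t < (gh i z - g0 i)\<^sup>2}
      + emeasure (sample_law n PX f g1) {z \<in> space (sample_law n PX f g1). t < (gh i z - g1 i)\<^sup>2}"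
    by (rule two_point_error_prob[OF _ _ _ light est])
  also have "\<dots> \<le> ?Q + ?Q"
  proof -
    have "emeasure (sample_law n PX f g) {z \<in> space (sample_law n PX f g). t < (gh i z - g i)\<^sup>2} \<le> ?Q"
      if "g \<in> holder_class Y \<beta> C" for g
      by (rule SUP_upper2[OF that], rule SUP_upper2[OF i]) simp
    then show ?thesis using H by (intro add_mono)
  qed
  also have "1/2 = 2 * (1/4::ennreal)"
    using divide_mult_eq[of 2 1 2] by (simp add: ennreal_times_divide)
  finally show ?thesis by (rule le_of_double_le_add_self)
qed

end

lemma liminf_holder_class_pointwise_error_lower_bound:
  fixes Y :: "'a::metric_space set" and r t :: "nat \<Rightarrow> real"
  assumes noise: "(\<integral>\<^sup>+ x. ennreal (f x) \<partial>lborel) = 1" "f \<in> borel_measurable borel"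
    and C: "C > 0" and \<beta>: "0 < \<beta>" "\<beta> \<le> 1"
    and scale: "\<forall>\<^sub>F n in sequentially. 0 < r n \<and> r n \<le> 1 \<and> 4 * t n < (C * r n powr \<beta>)\<^sup>2
        \<and> ball_packing Y (r n) (2 * n)"
    and design: "\<And>n. design Y (PX n)" and est: "\<And>n. estimator n (gh n)"
  shows "1/4 \<le> liminf (\<lambda>n. SUP g\<in>holder_class Y \<beta> C. SUP x\<in>Y. emeasure (sample_law n (PX n) f g)
             {z \<in> space (sample_law n (PX n) f g). t n < (gh n x z - g x)\<^sup>2})"
  using scale
proof (rule Liminf_bounded[OF eventually_mono])
  fix n assume n: "0 < r n \<and> r n \<le> 1 \<and> 4 * t n < (C * r n powr \<beta>)\<^sup>2
        \<and> ball_packing Y (r n) (2 * n)"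
  interpret regression_model "PX n" f by (rule regression_model_of_design[OF design noise])
  obtain S where S: "S \<subseteq> Y" "finite S" "S \<noteq> {}" "2 * n \<le> card S" "separated (2 * r n) S"
    using n by (auto simp: ball_packing_def)
  obtain i where "i \<in> S" "real n * measure (PX n) (ball i (r n)) \<le> 1/2"
    using exists_light_ball[OF prob_space_axioms sets_PX S(2-5)] by blast
  then show "1/4 \<le> (SUP g\<in>holder_class Y \<beta> C. SUP x\<in>Y. emeasure (sample_law n (PX n) f g)
             {z \<in> space (sample_law n (PX n) f g). t n < (gh n x z - g x)\<^sup>2})"
    using n S(1) by (intro holder_class_pointwise_error_lower_bound[OF est _ C _ _ \<beta>]) auto
qed

section \<open>The uniform design and Assouad's cube argument\<close>

definition uniform_design :: "'a::topological_space set \<Rightarrow> 'a measure" where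
  "uniform_design S = distr (uniform_count_measure S) borel (\<lambda>x. x)"

lemma
  assumes "finite S" "S \<noteq> {}"
  shows prob_space_uniform_design: "prob_space (uniform_design S)"
    and sets_uniform_design: "sets (uniform_design S) = sets borel"
    and emeasure_uniform_design:
      "A \<in> sets borel \<Longrightarrow> emeasure (uniform_design S) A = card (A \<inter> S) / card S"
proof -
  have id: "(\<lambda>x. x) \<in> uniform_count_measure S \<rightarrow>\<^sub>M borel"
    by (simp add: measurable_cong_sets[OF sets_uniform_count_measure_count_space refl])
  show "prob_space (uniform_design S)" unfolding uniform_design_def
    by (intro prob_space.prob_space_distr prob_space_uniform_count_measure assms id)
  show "sets (uniform_design S) = sets borel" by (simp add: uniform_design_def)
  assume A: "A \<in> sets borel"
  then have "emeasure (uniform_design S) A = emeasure (uniform_count_measure S) (A \<inter> S)"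
    unfolding uniform_design_def
    by (subst emeasure_distr[OF id]) (auto simp: space_uniform_count_measure Int_commute)
  also have "\<dots> = card (A \<inter> S) / card S" using assms by (intro emeasure_uniform_count_measure) auto
  finally show "emeasure (uniform_design S) A = card (A \<inter> S) / card S" .
qed

lemma design_uniform_design:
  assumes "Y \<in> sets borel" "S \<subseteq> Y" "finite S" "S \<noteq> {}"
  shows "design Y (uniform_design S)"
  using assms by (simp add: design_def prob_space_uniform_design sets_uniform_design
      emeasure_uniform_design Int_absorb1[OF assms(2)])

text \<open>No measurability of h is needed: the left-hand side is the integral of a simple
  function below h.\<close>
lemma sum_le_card_mult_nn_integral_uniform_design:
  fixes S :: "'a::metric_space set"
  assumes S: "finite S" "S \<noteq> {}"
  shows "(\<Sum>i\<in>S. h i) \<le> of_nat (card S) * (\<integral>\<^sup>+ x. h x \<partial>uniform_design S)"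
proof -
  define p where "p = ennreal (1 / card S)"
  have point: "emeasure (uniform_design S) {i} = p" if "i \<in> S" for i
    using emeasure_uniform_design[OF S, of "{i}"] that by (simp add: p_def)
  have "of_nat (card S) * p = 1"
    using S by (simp add: p_def ennreal_of_nat_eq_real_of_nat ennreal_mult'[symmetric])
  then have "(\<Sum>i\<in>S. h i) = (\<Sum>i\<in>S. h i * (of_nat (card S) * p))" by simp
  also have "\<dots> = of_nat (card S) * (\<Sum>i\<in>S. h i * p)"
    by (simp add: sum_distrib_left ac_simps)
  also have "(\<Sum>i\<in>S. h i * p) = (\<Sum>i\<in>S. \<integral>\<^sup>+ x. h i * indicator {i} x \<partial>uniform_design S)"
    using point by (intro sum.cong refl) (simp add: nn_integral_cmult_indicator sets_uniform_design[OF S])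
  also have "\<dots> = \<integral>\<^sup>+ x. (\<Sum>i\<in>S. h i * indicator {i} x) \<partial>uniform_design S"
    by (intro nn_integral_sum[symmetric]) (simp add: measurable_cong_sets[OF sets_uniform_design[OF S] refl])
  also have "\<dots> \<le> \<integral>\<^sup>+ x. h x \<partial>uniform_design S"
  proof (intro nn_integral_mono)
    fix x
    have "(\<Sum>i\<in>S. h i * indicator {i} x) = (\<Sum>i\<in>S. if i = x then h x else 0)"
      by (intro sum.cong) (auto simp: indicator_def)
    then show "(\<Sum>i\<in>S. h i * indicator {i} x) \<le> h x" using S(1) by (simp add: sum.delta)
  qed
  finally show ?thesis by (simp add: mult_left_mono)
qed

lemma sum_Pow_eq_sum_pairs:
  fixes D :: "'a set \<Rightarrow> 'b::comm_monoid_add"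
  assumes "finite S" "i \<in> S"
  shows "(\<Sum>\<sigma>\<in>Pow S. D \<sigma>) = (\<Sum>\<sigma>\<in>Pow (S - {i}). D \<sigma> + D (insert i \<sigma>))"
proof -
  have S: "S = insert i (S - {i})" using assms by auto
  have "Pow S = Pow (S - {i}) \<union> insert i ` Pow (S - {i})"
    by (subst S) (rule Pow_insert)
  moreover have "Pow (S - {i}) \<inter> insert i ` Pow (S - {i}) = {}" by auto
  ultimately have "(\<Sum>\<sigma>\<in>Pow S. D \<sigma>) = (\<Sum>\<sigma>\<in>Pow (S - {i}). D \<sigma>) + (\<Sum>\<sigma>\<in>insert i ` Pow (S - {i}). D \<sigma>)"
    using assms(1) by (simp add: sum.union_disjoint)
  also have "(\<Sum>\<sigma>\<in>insert i ` Pow (S - {i}). D \<sigma>) = (\<Sum>\<sigma>\<in>Pow (S - {i}). D (insert i \<sigma>))"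
    by (intro sum.reindex_cong[where l="insert i"]) (auto simp: inj_on_def)
  finally show ?thesis by (simp add: sum.distrib)
qed

lemma sum_Pow_ge_pairs:
  fixes D :: "'a set \<Rightarrow> 'b::{ordered_comm_monoid_add, semiring_1}"
  assumes "finite S" "i \<in> S" and pair: "\<And>\<sigma>. \<sigma> \<subseteq> S - {i} \<Longrightarrow> u \<le> D \<sigma> + D (insert i \<sigma>)"
  shows "of_nat (2 ^ (card S - 1)) * u \<le> (\<Sum>\<sigma>\<in>Pow S. D \<sigma>)"
proof -
  have "of_nat (2 ^ (card S - 1)) * u = (\<Sum>\<sigma>\<in>Pow (S - {i}). u)"
    using assms by (simp add: card_Pow)
  also have "\<dots> \<le> (\<Sum>\<sigma>\<in>Pow (S - {i}). D \<sigma> + D (insert i \<sigma>))"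
    by (intro sum_mono pair) auto
  finally show ?thesis by (simp add: sum_Pow_eq_sum_pairs[OF assms(1,2)])
qed

lemma measure_uniform_design_ball:
  assumes S: "finite S" "i \<in> S" "separated r S" and r: "0 < r"
  shows "measure (uniform_design S) (ball i r) = 1 / card S"
proof -
  have "ball i r \<inter> S = {i}"
    using S r by (force simp: separated_def)
  moreover have "S \<noteq> {}" using S by auto
  ultimately show ?thesis
    using emeasure_uniform_design[of S "ball i r"] S by (simp add: measure_def)
qed

context regression_model
begin

lemma holder_bump_flip_risk:
  assumes est: "estimator n gh"
    and C: "C > 0" and r: "0 < r" "r \<le> 1" and \<beta>: "0 < \<beta>" "\<beta> \<le> 1"
    and light: "real n * measure PX (ball i r) \<le> 1/2"
    and far: "\<And>j. j \<in> \<sigma> \<Longrightarrow> r \<le> dist i j"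
  shows "ennreal ((C * r powr \<beta>)\<^sup>2 / 4)
    \<le> (\<integral>\<^sup>+ z. ennreal ((gh i z - holder_bump C \<beta> r \<sigma> i)\<^sup>2) \<partial>sample_law n PX f (holder_bump C \<beta> r \<sigma>))
     + (\<integral>\<^sup>+ z. ennreal ((gh i z - holder_bump C \<beta> r (insert i \<sigma>) i)\<^sup>2)
          \<partial>sample_law n PX f (holder_bump C \<beta> r (insert i \<sigma>)))"
proof -
  have "holder_bump C \<beta> r \<tau> \<in> borel_measurable borel" for \<tau> :: "'a set"
    using holder_bump_in_holder_class[OF C r \<beta>, of \<tau> UNIV] by (simp add: holder_class_def)
  moreover have "holder_bump C \<beta> r (insert i \<sigma>) i - holder_bump C \<beta> r \<sigma> i = C * r powr \<beta>"
    using holder_bump_far[OF far] holder_bump_center[of i "insert i \<sigma>" r] r by simp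
  ultimately show ?thesis
    using two_point_error_risk[OF _ _ _ light est, of "holder_bump C \<beta> r \<sigma>" "holder_bump C \<beta> r (insert i \<sigma>)"]
    by (simp add: holder_bump_insert)
qed

end

text \<open>Assouad's cube argument: if at every point i of S each pair of hypotheses sigma, sigma + {i}
  has pointwise risks summing to at least u, then averaging over the 2^|S| hypotheses and over
  the design points shows that one of them has integrated risk at least u/2.\<close>
lemma assouad_uniform_design:
  fixes S :: "'a::metric_space set" and D :: "'a set \<Rightarrow> 'a \<Rightarrow> ennreal"
  assumes S: "finite S" "S \<noteq> {}"
    and pair: "\<And>i \<sigma>. i \<in> S \<Longrightarrow> \<sigma> \<subseteq> S - {i} \<Longrightarrow> u \<le> D \<sigma> i + D (insert i \<sigma>) i"
    and risk: "\<And>\<sigma>. (\<integral>\<^sup>+ x. D \<sigma> x \<partial>uniform_design S) \<le> W"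
  shows "u \<le> W + W"
proof -
  define M where "M = card S"
  have M: "0 < M" using S by (simp add: M_def card_gt_0_iff)
  have "of_nat M * (of_nat (2 ^ (M - 1)) * u) = (\<Sum>i\<in>S. of_nat (2 ^ (M - 1)) * u)"
    by (simp add: M_def)
  also have "\<dots> \<le> (\<Sum>i\<in>S. \<Sum>\<sigma>\<in>Pow S. D \<sigma> i)"
    unfolding M_def using S(1) pair by (intro sum_mono sum_Pow_ge_pairs)
  also have "\<dots> = (\<Sum>\<sigma>\<in>Pow S. \<Sum>i\<in>S. D \<sigma> i)"
    by (rule sum.swap)
  also have "\<dots> \<le> (\<Sum>\<sigma>\<in>Pow S. of_nat M * W)"
  proof (rule sum_mono)
    fix \<sigma>
    have "(\<Sum>i\<in>S. D \<sigma> i) \<le> of_nat M * (\<integral>\<^sup>+ x. D \<sigma> x \<partial>uniform_design S)"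
      unfolding M_def by (rule sum_le_card_mult_nn_integral_uniform_design[OF S])
    also have "\<dots> \<le> of_nat M * W" by (intro mult_left_mono risk) simp
    finally show "(\<Sum>i\<in>S. D \<sigma> i) \<le> of_nat M * W" .
  qed
  also have "\<dots> = of_nat M * (of_nat (2 ^ (M - 1)) * (W + W))"
  proof -
    have "card (Pow S) = 2 ^ (M - 1) * 2"
      using M S(1) by (cases M) (simp_all add: M_def card_Pow mult.commute)
    then show ?thesis by (simp add: mult_2_right[symmetric] ac_simps)
  qed
  finally show "u \<le> W + W"
    using M by (simp add: ennreal_mult_le_mult_iff ennreal_of_nat_neq_top power_eq_top_ennreal)
qed

lemma holder_class_uniform_design_risk_lower_bound:
  fixes S :: "'a::metric_space set"
  assumes model: "regression_model (uniform_design S) f" and est: "estimator n gh"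
    and S: "S \<subseteq> Y" "finite S" "S \<noteq> {}" "2 * n \<le> card S" "separated (2 * r) S"
    and C: "C > 0" and r: "0 < r" "r \<le> 1" and \<beta>: "0 < \<beta>" "\<beta> \<le> 1"
  shows "ennreal ((C * r powr \<beta>)\<^sup>2 / 8) \<le> worst_risk n (uniform_design S) f (holder_class Y \<beta> C) gh"
proof -
  interpret regression_model "uniform_design S" f by (fact model)
  define W where "W = worst_risk n (uniform_design S) f (holder_class Y \<beta> C) gh"
  define D where "D \<sigma> x = (\<integral>\<^sup>+ z. ennreal ((gh x z - holder_bump C \<beta> r \<sigma> x)\<^sup>2)
      \<partial>sample_law n (uniform_design S) f (holder_bump C \<beta> r \<sigma>))" for \<sigma> x
  have "ennreal ((C * r powr \<beta>)\<^sup>2 / 4) \<le> W + W"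
  proof (rule assouad_uniform_design[OF S(2,3)])
    fix i \<sigma> assume i: "i \<in> S" and \<sigma>: "\<sigma> \<subseteq> S - {i}"
    have "separated r S" using S(5) r by (fastforce simp: separated_def)
    moreover have "real n / card S \<le> 1/2" using S(3,4) by (auto simp: divide_le_eq card_gt_0_iff)
    ultimately have "real n * measure (uniform_design S) (ball i r) \<le> 1/2"
      using measure_uniform_design_ball[OF S(2) i _ r(1)] by simp
    moreover have "r \<le> dist i j" if "j \<in> \<sigma>" for j
      using S(5) i \<sigma> that r by (fastforce simp: separated_def)
    ultimately show "ennreal ((C * r powr \<beta>)\<^sup>2 / 4) \<le> D \<sigma> i + D (insert i \<sigma>) i"
      unfolding D_def by (intro holder_bump_flip_risk[OF est C r \<beta>])
  next
    show "(\<integral>\<^sup>+ x. D \<sigma> x \<partial>uniform_design S) \<le> W" for \<sigma>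
      unfolding W_def worst_risk_def D_def
      by (rule SUP_upper2[OF holder_bump_in_holder_class[OF C r \<beta>, of \<sigma>]]) simp
  qed
  moreover have "2 * ennreal ((C * r powr \<beta>)\<^sup>2 / 8) = ennreal ((C * r powr \<beta>)\<^sup>2 / 4)"
    using ennreal_mult[of 2 "(C * r powr \<beta>)\<^sup>2 / 8"] by simp
  ultimately have "2 * ennreal ((C * r powr \<beta>)\<^sup>2 / 8) \<le> W + W" by simp
  then show ?thesis unfolding W_def by (rule le_of_double_le_add_self)
qed

lemma obtain_ball_packing_sequence:
  assumes "\<forall>\<^sub>F n in sequentially. ball_packing Y (r n) (2 * n)"
  obtains S where "\<And>n. S n \<subseteq> Y" "\<And>n. finite (S n)" "\<And>n. S n \<noteq> {}"
    and "\<forall>\<^sub>F n in sequentially. 2 * n \<le> card (S n) \<and> separated (2 * r n) (S n)"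
proof -
  obtain N where N: "\<And>n. N \<le> n \<Longrightarrow> ball_packing Y (r n) (2 * n)"
    using assms by (auto simp: eventually_sequentially)
  have "\<forall>n. \<exists>S. S \<subseteq> Y \<and> finite S \<and> S \<noteq> {} \<and> (N \<le> n \<longrightarrow> 2 * n \<le> card S \<and> separated (2 * r n) S)"
  proof
    fix n
    show "\<exists>S. S \<subseteq> Y \<and> finite S \<and> S \<noteq> {} \<and> (N \<le> n \<longrightarrow> 2 * n \<le> card S \<and> separated (2 * r n) S)"
      using N[of n] N[of N] by (cases "N \<le> n") (auto simp: ball_packing_def)
  qed
  from choice[OF this] obtain S where "\<And>n. S n \<subseteq> Y \<and> finite (S n) \<and> S n \<noteq> {}
      \<and> (N \<le> n \<longrightarrow> 2 * n \<le> card (S n) \<and> separated (2 * r n) (S n))"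
    by blast
  then show ?thesis by (intro that[of S]) (auto simp: eventually_sequentially)
qed

lemma exists_design_without_fast_estimator:
  fixes Y :: "'a::metric_space set" and r L :: "nat \<Rightarrow> real"
  assumes Y: "Y \<in> sets borel"
    and noise: "(\<integral>\<^sup>+ x. ennreal (f x) \<partial>lborel) = 1" "f \<in> borel_measurable borel"
    and C: "C > 0" and \<beta>: "0 < \<beta>" "\<beta> \<le> 1" and c: "c > 0"
    and scale: "\<forall>\<^sub>F n in sequentially. 0 < r n \<and> r n \<le> 1 \<and> c \<le> (C * r n powr \<beta>)\<^sup>2 * L n
        \<and> ball_packing Y (r n) (2 * n)"
  shows "\<exists>PX. (\<forall>n. design Y (PX n)) \<and>
    \<not> (\<exists>gh. (\<forall>n. estimator n (gh n)) \<and>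
         (\<lambda>n. worst_risk n (PX n) f (holder_class Y \<beta> C) (gh n) * ennreal (L n)) \<longlonglongrightarrow> 0)"
proof -
  obtain S where S: "\<And>n. S n \<subseteq> Y" "\<And>n. finite (S n)" "\<And>n. S n \<noteq> {}"
    and large: "\<forall>\<^sub>F n in sequentially. 2 * n \<le> card (S n) \<and> separated (2 * r n) (S n)"
    using obtain_ball_packing_sequence[OF eventually_mono[OF scale]] by blast
  have design: "design Y (uniform_design (S n))" for n
    using S by (intro design_uniform_design Y)
  have low: "\<forall>\<^sub>F n in sequentially. ennreal (c / 8)
      \<le> worst_risk n (uniform_design (S n)) f (holder_class Y \<beta> C) (gh n) * ennreal (L n)"
    if est: "\<And>n. estimator n (gh n)" for gh
    using scale large
  proof eventually_elim
    case (elim n)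
    then have "0 < (C * r n powr \<beta>)\<^sup>2 * L n" using c by linarith
    then have L: "0 \<le> L n" by (simp add: zero_less_mult_iff)
    have "ennreal (c / 8) \<le> ennreal ((C * r n powr \<beta>)\<^sup>2 / 8) * ennreal (L n)"
      using elim L by (simp add: ennreal_mult'[symmetric] ennreal_leI)
    also have "\<dots> \<le> worst_risk n (uniform_design (S n)) f (holder_class Y \<beta> C) (gh n) * ennreal (L n)"
      using S elim
      by (intro mult_right_mono holder_class_uniform_design_risk_lower_bound[OF
          regression_model_of_design[OF design noise] est _ _ _ _ _ C _ _ \<beta>]) auto
    finally show ?case .
  qed
  have high: "\<forall>\<^sub>F n in sequentially.
      worst_risk n (uniform_design (S n)) f (holder_class Y \<beta> C) (gh n) * ennreal (L n) < ennreal (c / 8)"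
    if "(\<lambda>n. worst_risk n (uniform_design (S n)) f (holder_class Y \<beta> C) (gh n) * ennreal (L n)) \<longlonglongrightarrow> 0"
    for gh
    using that c by (intro order_tendstoD(2)) auto
  have "\<not> (\<exists>gh. (\<forall>n. estimator n (gh n)) \<and>
      (\<lambda>n. worst_risk n (uniform_design (S n)) f (holder_class Y \<beta> C) (gh n) * ennreal (L n)) \<longlonglongrightarrow> 0)"
  proof (intro notI, elim exE conjE)
    fix gh assume est: "\<forall>n. estimator n (gh n)"
      and lim: "(\<lambda>n. worst_risk n (uniform_design (S n)) f (holder_class Y \<beta> C) (gh n) * ennreal (L n)) \<longlonglongrightarrow> 0"
    from low[of gh] est have "\<forall>\<^sub>F n in sequentially. ennreal (c / 8)
      \<le> worst_risk n (uniform_design (S n)) f (holder_class Y \<beta> C) (gh n) * ennreal (L n)"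
      by blast
    with high[OF lim] have "\<forall>\<^sub>F n in sequentially. False"
      by eventually_elim (simp add: not_le[symmetric])
    then show False by simp
  qed
  then show ?thesis using design by (intro exI[of _ "\<lambda>n. uniform_design (S n)"]) simp
qed

theorem theorem2:
  fixes Y :: "'a::polish_space set"
    and s0 cx0 cx1 \<gamma> C \<beta> :: real
    and f :: "real \<Rightarrow> real"
  assumes Y_borel: "Y \<in> sets borel"
    and Y_compact: "compact Y"
    and s0_pos: "s0 > 0" and cx0_pos: "0 < cx0" and cx01: "cx0 < cx1" and gamma_pos: "\<gamma> > 0"
    and entropy: "\<And>s. 0 < s \<Longrightarrow> s < s0 \<Longrightarrow>
        cx0 * s powr (-\<gamma>) \<le> ln (real (covering_number s Y)) \<and>
        ln (real (covering_number s Y)) \<le> cx1 * s powr (-\<gamma>)"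
    and C_pos: "C > 0" and beta: "0 < \<beta>" "\<beta> \<le> 1"
    and f_nonneg: "\<And>x. f x \<ge> 0"
    and f_density: "(\<integral>\<^sup>+ x. ennreal (f x) \<partial>lborel) = 1"
    and f_C1: "f C1_differentiable_on UNIV"
    and f_fisher: "integrable lborel (\<lambda>x. (deriv f x)\<^sup>2 / f x)"
  shows
    "(\<exists>PX :: nat \<Rightarrow> 'a measure. (\<forall>n. design Y (PX n)) \<and>
        \<not> (\<exists>gh. (\<forall>n. estimator n (gh n)) \<and>
             (\<lambda>n. worst_risk n (PX n) f (holder_class Y \<beta> C) (gh n)
                    * ennreal (ln (real n) powr (2 * \<beta> / \<gamma>))) \<longlonglongrightarrow> 0))
     \<and>
     (\<exists>c > 0. \<forall>(PX :: nat \<Rightarrow> 'a measure) gh. (\<forall>n. design Y (PX n)) \<longrightarrow> (\<forall>n. estimator n (gh n)) \<longrightarrow>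
        liminf (\<lambda>n. SUP g\<in>holder_class Y \<beta> C. SUP x\<in>Y.
           emeasure (sample_law n (PX n) f g)
             {z \<in> space (sample_law n (PX n) f g).
                (gh n x z - g x)\<^sup>2 > c * ln (real n) powr (- 2 * \<beta> / \<gamma>)}) > 0)"
proof -
  have f_meas: "f \<in> borel_measurable borel"
    using C1_differentiable_imp_continuous_on[OF f_C1] by (rule borel_measurable_continuous_onI)
  define r where "r = log_radius (cx0 / 2) \<gamma>"
  define c where "c = (C * ((cx0 / 2) powr (1 / \<gamma>) / 2) powr \<beta>)\<^sup>2"
  have c: "c > 0" using C_pos cx0_pos by (simp add: c_def)
  have "\<forall>\<^sub>F n in sequentially. 0 < ln (real n) \<and> 0 < r n \<and> r n \<le> 1 \<and> ball_packing Y (r n) (2 * n)"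
    unfolding r_def using s0_pos cx0_pos gamma_pos entropy by (intro eventually_ball_packing_log_radius) auto
  then have scale: "\<forall>\<^sub>F n in sequentially. 0 < ln (real n) \<and> 0 < r n \<and> r n \<le> 1
      \<and> (C * r n powr \<beta>)\<^sup>2 = c * ln (real n) powr (- 2 * \<beta> / \<gamma>) \<and> ball_packing Y (r n) (2 * n)"
    by eventually_elim (simp add: r_def c_def holder_bump_height_log_radius)
  have "\<exists>PX. (\<forall>n. design Y (PX n)) \<and> \<not> (\<exists>gh. (\<forall>n. estimator n (gh n)) \<and>
      (\<lambda>n. worst_risk n (PX n) f (holder_class Y \<beta> C) (gh n) * ennreal (ln (real n) powr (2 * \<beta> / \<gamma>))) \<longlonglongrightarrow> 0)"
    using scale by (intro exists_design_without_fast_estimator[OF Y_borel f_density f_meas C_pos beta c, where r = r])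
      (auto elim!: eventually_mono simp: mult.assoc powr_add[symmetric])
  moreover have "1/4 \<le> liminf (\<lambda>n. SUP g\<in>holder_class Y \<beta> C. SUP x\<in>Y. emeasure (sample_law n (PX n) f g)
      {z \<in> space (sample_law n (PX n) f g). (gh n x z - g x)\<^sup>2 > c / 8 * ln (real n) powr (- 2 * \<beta> / \<gamma>)})"
    if "\<forall>n. design Y (PX n)" "\<forall>n. estimator n (gh n)" for PX gh
    using scale that c
    by (intro liminf_holder_class_pointwise_error_lower_bound[OF f_density f_meas C_pos beta, where r = r])
      (auto elim!: eventually_mono)
  moreover have "(0::ennreal) < 1/4" by (simp add: ennreal_zero_less_divide)
  ultimately show ?thesis using c by (intro conjI exI[of _ "c / 8"]) (auto intro: order_less_le_trans)
qed

end
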